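(* Let $F$ be a finite extension of $\mathbb{Q}_p$ and $\pi=\pi(\chi_1,\chi_2)$ a tamely ramified irreducible admissible infinite-dimensional representation of $\mathrm{GL}_2(F)$ (with $\chi_1=|\cdot|\chi_2$ if $\pi$ is special), $\alpha_i=\chi_i(\varpi)\sqrt q$, $\nu=\alpha_1\alpha_2/q$. Let $\chi:F^*\to\mathbb{C}^*$ be a quasi-character with conductor $\mathfrak{p}^f$, and if $f=0$ assume $|\chi(\varpi)|<|\alpha_2|$. Then the integral $\int_{F^*}\chi(x)\mu_{\alpha_1/\nu}(dx)$ converges and \[\int_{F^*}\chi(x)\mu_{\alpha_1/\nu}(dx)=e(\alpha_1,\alpha_2,\chi)\,\tau(\chi)\,L(\tfrac12,\pi\otimes\chi),\] where $e(\alpha_1,\alpha_2,\chi)=\dfrac{(1-\alpha_1\chi(\varpi)q^{-1})(1-\alpha_2\chi(\varpi)^{-1}q^{-1})(1-\alpha_2\chi(\varpi)q^{-1})}{1-\chi(\varpi)\alpha_2^{-1}}$ if $f=0$ and $\pi$ is spherical; $e=\dfrac{(1-\alpha_1\chi(\varpi)q^{-1})(1-\alpha_2\chi(\varpi)^{-1}q^{-1})}{1-\chi(\varpi)\alpha_2^{-1}}$ if $f=0$ and $\pi$ is special; and $e=(\alpha_1/\nu)^{-f}=(\alpha_2/q)^f$ if $f>0$; the right-hand side being continuously extended across the potential removable singularities at $\chi(\varpi)=q/\alpha_1$ or $q/\alpha_2$.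
   Context: $\mathcal{O}_F$ is the ring of integers, $\varpi$ a uniformizer, $\mathfrak{p}=(\varpi)$, $q=\#\mathcal{O}_F/\mathfrak{p}$, $U=\mathcal{O}_F^\times$, $U^{(n)}=1+\mathfrak{p}^n$, $U^{(0)}=U$; $|\varpi|=q^{-1}$. $\psi:F\to\bar{\mathbb{Q}}^*$ is a fixed additive character with $\mathcal{O}_F\subseteq\ker\psi$ and $\mathfrak{p}^{-1}\not\subseteq\ker\psi$. $dx$ is the Haar measure on $F$ with $\int_{\mathcal{O}_F}dx=1$, $d^\times x=\frac{q}{q-1}\frac{dx}{|x|}$. The conductor of $\chi$ is the largest $\mathfrak{p}^n$ with $U^{(n)}\subseteq\ker\chi$. Gauss sum: $\tau(\chi)=[U:U^{(f)}]\int_{\varpi^{-f}U}\psi(x)\chi(x)d^\times x$. For $\beta\in\mathbb{C}^*$, $\chi_\beta(x)=\beta^{\operatorname{ord}(x)}$, and $\mu_{\alpha_1/\nu}$ is the distribution $\psi(x)\chi_{\alpha_1/\nu}(x)dx$ on $F^*$. For locally constant $g$ on $F^*$, $\int_{F^*}g\,dx:=\lim_{n\to\infty}\int_{-n\le\operatorname{ord}x\le n}g\,dx$. Tamely ramified means the conductor of $\pi$ divides $\mathfrak{p}$; then $\chi_1,\chi_2$ are unramified; $\pi$ is special if $\chi_1\chi_2^{-1}=|\cdot|^{\pm1}$ and spherical otherwise. $L(s,\pi\otimes\chi)$ is the standard local L-factor. *)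

theory Defs
  imports "HOL-Analysis.Analysis"
begin

text \<open>A non-archimedean local field of characteristic 0 (= finite extension of Q_p),
  given by a normalized discrete valuation ord (meaningful on nonzero elements),
  a uniformizer w and the residue field cardinality q.\<close>

definition ball_v :: "('a::field \<Rightarrow> int) \<Rightarrow> 'a \<Rightarrow> int \<Rightarrow> 'a set" where
  "ball_v ord a n = {x. x = a \<or> ord (x - a) \<ge> n}"

definition absv :: "('a::field \<Rightarrow> int) \<Rightarrow> nat \<Rightarrow> 'a \<Rightarrow> real" where
  "absv ord q x = (if x = 0 then 0 else real q powr (- real_of_int (ord x)))"

definition nonarch_local_field :: "('a::field_char_0 \<Rightarrow> int) \<Rightarrow> 'a \<Rightarrow> nat \<Rightarrow> bool" where
  "nonarch_local_field ord w q \<longleftrightarrow>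
     (\<forall>x y. x \<noteq> 0 \<longrightarrow> y \<noteq> 0 \<longrightarrow> ord (x * y) = ord x + ord y) \<and>
     (\<forall>x y. x \<noteq> 0 \<longrightarrow> y \<noteq> 0 \<longrightarrow> x + y \<noteq> 0 \<longrightarrow> ord (x + y) \<ge> min (ord x) (ord y)) \<and>
     w \<noteq> 0 \<and> ord w = 1 \<and>
     (\<exists>R. finite R \<and> card R = q \<and> R \<subseteq> ball_v ord 0 0 \<and>
          (\<forall>x \<in> ball_v ord 0 0. \<exists>!r. r \<in> R \<and> x - r \<in> ball_v ord 0 1)) \<and>
     (\<forall>X :: nat \<Rightarrow> 'a.
        (\<forall>e>0. \<exists>N. \<forall>m\<ge>N. \<forall>n\<ge>N. absv ord q (X m - X n) < e) \<longrightarrow>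
        (\<exists>l. \<forall>e>0. \<exists>N. \<forall>n\<ge>N. absv ord q (X n - l) < e))"

definition is_haar :: "('a::field \<Rightarrow> int) \<Rightarrow> 'a measure \<Rightarrow> bool" where
  "is_haar ord M \<longleftrightarrow> space M = UNIV \<and>
     sets M = sigma_sets UNIV (range (\<lambda>(a, n). ball_v ord a n)) \<and>
     (\<forall>A \<in> sets M. \<forall>a. emeasure M ((\<lambda>x. a + x) ` A) = emeasure M A) \<and>
     emeasure M (ball_v ord 0 0) = 1"

definition add_char :: "('a::field \<Rightarrow> int) \<Rightarrow> ('a \<Rightarrow> complex) \<Rightarrow> bool" where
  "add_char ord psi \<longleftrightarrow> (\<forall>x y. psi (x + y) = psi x * psi y) \<and> (\<forall>x. psi x \<noteq> 0) \<and>
     (\<forall>x \<in> ball_v ord 0 0. psi x = 1) \<and> (\<exists>x \<in> ball_v ord 0 (-1). psi x \<noteq> 1)"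

definition quasi_char :: "('a::field \<Rightarrow> int) \<Rightarrow> nat \<Rightarrow> ('a \<Rightarrow> complex) \<Rightarrow> bool" where
  "quasi_char ord q chi \<longleftrightarrow>
     (\<forall>x y. x \<noteq> 0 \<longrightarrow> y \<noteq> 0 \<longrightarrow> chi (x * y) = chi x * chi y) \<and> (\<forall>x. x \<noteq> 0 \<longrightarrow> chi x \<noteq> 0) \<and>
     (\<forall>x. x \<noteq> 0 \<longrightarrow> (\<forall>e>0. \<exists>d>0. \<forall>y. y \<noteq> 0 \<longrightarrow> absv ord q (y - x) < d \<longrightarrow> cmod (chi y - chi x) < e))"

definition U_n :: "('a::field \<Rightarrow> int) \<Rightarrow> nat \<Rightarrow> 'a set" where
  "U_n ord n = (if n = 0 then {x. x \<noteq> 0 \<and> ord x = 0} else {x. x = 1 \<or> ord (x - 1) \<ge> int n})"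

definition conductor_exp :: "('a::field \<Rightarrow> int) \<Rightarrow> ('a \<Rightarrow> complex) \<Rightarrow> nat" where
  "conductor_exp ord chi = (LEAST n. \<forall>x \<in> U_n ord n. chi x = 1)"

text \<open>Gauss sum tau(chi) = [U:U^(f)] * integral over w^(-f) U of psi chi d^x x,
  with d^x x = q/(q-1) dx/|x|.\<close>
definition gauss_sum :: "('a::field \<Rightarrow> int) \<Rightarrow> 'a \<Rightarrow> nat \<Rightarrow> 'a measure \<Rightarrow> ('a \<Rightarrow> complex)
    \<Rightarrow> ('a \<Rightarrow> complex) \<Rightarrow> complex" where
  "gauss_sum ord w q M psi chi =
     (let f = conductor_exp ord chi; U = U_n ord 0; Uf = U_n ord f in
       of_nat (card ((\<lambda>u. (\<lambda>y. u * y) ` Uf) ` U)) *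
       (LINT x : ((\<lambda>u. w powi (- int f) * u) ` U) | M.
          complex_of_real (real q / (real q - 1) / absv ord q x) * psi x * chi x))"

definition L_GL1 :: "('a::field \<Rightarrow> int) \<Rightarrow> 'a \<Rightarrow> nat \<Rightarrow> ('a \<Rightarrow> complex) \<Rightarrow> real \<Rightarrow> complex" where
  "L_GL1 ord w q eta s = (if conductor_exp ord eta = 0
      then 1 / (1 - eta w * complex_of_real (real q powr (- s))) else 1)"

text \<open>Standard L-factor of pi(chi1,chi2) twisted by chi: L(s,chi1 chi) L(s,chi2 chi) for
  the irreducible principal series (spherical case), L(s,chi1 chi) for the special
  representation with chi1 = |.| chi2.\<close>
definition L_pi :: "('a::field \<Rightarrow> int) \<Rightarrow> 'a \<Rightarrow> nat \<Rightarrow> bool \<Rightarrow> ('a \<Rightarrow> complex) \<Rightarrow> ('a \<Rightarrow> complex)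
    \<Rightarrow> ('a \<Rightarrow> complex) \<Rightarrow> real \<Rightarrow> complex" where
  "L_pi ord w q special chi1 chi2 chi s =
     (if special then L_GL1 ord w q (\<lambda>x. chi1 x * chi x) s
      else L_GL1 ord w q (\<lambda>x. chi1 x * chi x) s * L_GL1 ord w q (\<lambda>x. chi2 x * chi x) s)"

text \<open>The factor e(alpha1, alpha2, chi); z stands for chi(w), f for the conductor exponent.\<close>
definition e_fac :: "bool \<Rightarrow> nat \<Rightarrow> complex \<Rightarrow> complex \<Rightarrow> nat \<Rightarrow> complex \<Rightarrow> complex" where
  "e_fac special q a1 a2 f z =
     (if f = 0 then
        (if special then
           (1 - a1 * z / of_nat q) * (1 - a2 / z / of_nat q) / (1 - z / a2)
         else
           (1 - a1 * z / of_nat q) * (1 - a2 / z / of_nat q) * (1 - a2 * z / of_nat q) / (1 - z / a2))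
      else (a2 / of_nat q) ^ f)"

end

theory Submission
  imports Defs
begin

text \<open>Split \<open>F\<^sup>*\<close> into the shells \<open>\<varpi>\<^sup>k U\<close>. Haar measure is invariant under
  \<open>x \<mapsto> u x + t\<close> for units \<open>u\<close>, so a shell integral of \<open>\<chi> \<psi>\<close> vanishes whenever a
  translation (by an element of \<open>\<pp>\<^sup>-\<^sup>1\<close>, where \<open>\<psi>\<close> is nontrivial) or a unit
  (where \<open>\<chi>\<close> is nontrivial) preserves the shell and the other factor. If \<open>f > 0\<close> this leaves
  only the shell \<open>k = -f\<close>, which is the Gauss sum up to \<open>(\<alpha>\<^sub>1/\<nu>)\<^sup>-\<^sup>f\<close>, and the twisted
  L-factor is \<open>1\<close>. If \<open>f = 0\<close>, then \<open>\<chi> = \<chi>(\<varpi>)\<^sup>o\<^sup>r\<^sup>d\<close>, the shell integrals are differences of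
  integrals of \<open>\<psi>\<close> over balls, which equal the volume for balls inside \<open>\<O>\<^sub>F\<close> and vanish
  otherwise; the resulting geometric series sums to a rational function of \<open>\<chi>(\<varpi>)\<close>, which is
  the right-hand side once the Euler factors cancel.\<close>

section \<open>Valuation and balls\<close>

definition ord_ge :: "('a::field \<Rightarrow> int) \<Rightarrow> 'a \<Rightarrow> int \<Rightarrow> bool" where
  "ord_ge ord x n \<longleftrightarrow> x = 0 \<or> ord x \<ge> n"

lemma mem_ball_v_iff: "x \<in> ball_v ord a n \<longleftrightarrow> ord_ge ord (x - a) n"
  by (auto simp: ball_v_def ord_ge_def)

locale local_field =
  fixes ord :: "'a::field_char_0 \<Rightarrow> int" and w :: 'a and q :: nat
  assumes local_field: "nonarch_local_field ord w q"
begin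

lemma ord_mult: "x \<noteq> 0 \<Longrightarrow> y \<noteq> 0 \<Longrightarrow> ord (x * y) = ord x + ord y"
  using local_field unfolding nonarch_local_field_def by blast

lemma ord_add_ge_min: "x \<noteq> 0 \<Longrightarrow> y \<noteq> 0 \<Longrightarrow> x + y \<noteq> 0 \<Longrightarrow> ord (x + y) \<ge> min (ord x) (ord y)"
  using local_field unfolding nonarch_local_field_def by blast

lemma w_nonzero: "w \<noteq> 0" and ord_w: "ord w = 1"
  using local_field unfolding nonarch_local_field_def by blast+

lemma ord_1 [simp]: "ord 1 = 0"
  using ord_mult[of 1 1] by simp

lemma ord_inverse: "x \<noteq> 0 \<Longrightarrow> ord (inverse x) = - ord x"
  using ord_mult[of x "inverse x"] by simp

lemma ord_divide: "x \<noteq> 0 \<Longrightarrow> y \<noteq> 0 \<Longrightarrow> ord (x / y) = ord x - ord y"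
  by (simp add: divide_inverse ord_mult ord_inverse)

lemma ord_uminus [simp]: "ord (- x) = ord x"
proof (cases "x = 0")
  case False
  have "ord (-1) = 0"
    using ord_mult[of "-1" "-1"] by simp
  then show ?thesis
    using False ord_mult[of "-1" x] by simp
qed simp

lemma ord_power: "x \<noteq> 0 \<Longrightarrow> ord (x ^ n) = int n * ord x"
  by (induction n) (auto simp: ord_mult algebra_simps)

lemma ord_power_int: "x \<noteq> 0 \<Longrightarrow> ord (x powi k) = k * ord x"
  by (cases "k \<ge> 0") (auto simp: power_int_def ord_power ord_inverse)

lemma ord_w_power_int [simp]: "ord (w powi k) = k"
  using ord_power_int[OF w_nonzero] ord_w by simp

lemma ord_add_eq_left:
  assumes "x \<noteq> 0" "y \<noteq> 0" "ord x < ord y"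
  shows "x + y \<noteq> 0" "ord (x + y) = ord x"
proof -
  show nz: "x + y \<noteq> 0"
  proof
    assume "x + y = 0"
    then have "x = - y" by (simp add: eq_neg_iff_add_eq_0)
    then show False using assms by simp
  qed
  have "ord (x + y) \<ge> ord x"
    using ord_add_ge_min[OF assms(1,2) nz] assms(3) by simp
  moreover have "ord x \<ge> min (ord (x + y)) (ord (- y))"
    using ord_add_ge_min[of "x + y" "- y"] nz assms by simp
  ultimately show "ord (x + y) = ord x" using assms(3) by auto
qed

lemma ord_ge_0 [simp]: "ord_ge ord 0 n"
  by (simp add: ord_ge_def)

lemma ord_ge_add: "ord_ge ord x n \<Longrightarrow> ord_ge ord y n \<Longrightarrow> ord_ge ord (x + y) n"
  unfolding ord_ge_def using ord_add_ge_min[of x y] by fastforce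

lemma ord_ge_uminus [simp]: "ord_ge ord (- x) n \<longleftrightarrow> ord_ge ord x n"
  by (simp add: ord_ge_def)

lemma ord_ge_diff: "ord_ge ord x n \<Longrightarrow> ord_ge ord y n \<Longrightarrow> ord_ge ord (x - y) n"
  using ord_ge_add[of x n "- y"] by simp

lemma ord_ge_mono: "ord_ge ord x n \<Longrightarrow> m \<le> n \<Longrightarrow> ord_ge ord x m"
  by (auto simp: ord_ge_def)

lemma ord_ge_mult: "ord_ge ord x n \<Longrightarrow> ord_ge ord y m \<Longrightarrow> ord_ge ord (x * y) (n + m)"
  by (cases "x = 0"; cases "y = 0") (auto simp: ord_ge_def ord_mult)

lemma ord_ge_w_power_int: "ord_ge ord (w powi n) n"
  by (simp add: ord_ge_def)

lemma ord_ge_w_power_int_mult: "ord_ge ord (w powi n * x) m \<Longrightarrow> ord_ge ord x (m - n)"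
  using w_nonzero by (cases "x = 0") (auto simp: ord_ge_def ord_mult)

lemma ord_ge_unit_mult: "u \<noteq> 0 \<Longrightarrow> ord u = 0 \<Longrightarrow> ord_ge ord (u * y) n \<longleftrightarrow> ord_ge ord y n"
  by (cases "y = 0") (auto simp: ord_ge_def ord_mult)

lemma center_in_ball_v [simp]: "a \<in> ball_v ord a n"
  by (simp add: mem_ball_v_iff)

lemma ball_v_subset: "b \<in> ball_v ord a n \<Longrightarrow> n \<le> m \<Longrightarrow> ball_v ord b m \<subseteq> ball_v ord a n"
proof
  fix x assume b: "b \<in> ball_v ord a n" and nm: "n \<le> m" and x: "x \<in> ball_v ord b m"
  have "ord_ge ord ((x - b) + (b - a)) n"
    using x nm b by (intro ord_ge_add) (auto simp: mem_ball_v_iff intro: ord_ge_mono)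
  then show "x \<in> ball_v ord a n" by (simp add: mem_ball_v_iff)
qed

lemma ball_v_eq: "b \<in> ball_v ord a n \<Longrightarrow> ball_v ord b n = ball_v ord a n"
proof
  assume b: "b \<in> ball_v ord a n"
  show "ball_v ord b n \<subseteq> ball_v ord a n" using ball_v_subset[OF b] by simp
  have "a \<in> ball_v ord b n"
    using b ord_ge_uminus[of "b - a" n] by (simp add: mem_ball_v_iff)
  then show "ball_v ord a n \<subseteq> ball_v ord b n" using ball_v_subset by simp
qed

definition residues :: "'a set" where
  "residues = (SOME R. finite R \<and> card R = q \<and> R \<subseteq> ball_v ord 0 0 \<and>
     (\<forall>x \<in> ball_v ord 0 0. \<exists>!r. r \<in> R \<and> x - r \<in> ball_v ord 0 1))"

lemma residues: "finite residues" "card residues = q" "residues \<subseteq> ball_v ord 0 0"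
  "\<And>x. x \<in> ball_v ord 0 0 \<Longrightarrow> \<exists>!r. r \<in> residues \<and> x - r \<in> ball_v ord 0 1"
proof -
  have "\<exists>R. finite R \<and> card R = q \<and> R \<subseteq> ball_v ord 0 0 \<and>
          (\<forall>x \<in> ball_v ord 0 0. \<exists>!r. r \<in> R \<and> x - r \<in> ball_v ord 0 1)"
    using local_field unfolding nonarch_local_field_def by blast
  from someI_ex[OF this]
  show "finite residues" "card residues = q" "residues \<subseteq> ball_v ord 0 0"
    "\<And>x. x \<in> ball_v ord 0 0 \<Longrightarrow> \<exists>!r. r \<in> residues \<and> x - r \<in> ball_v ord 0 1"
    unfolding residues_def by blast+
qed

lemma q_ge_2: "q \<ge> 2"
proof -
  have mem: "(0::'a) \<in> ball_v ord 0 0" "(1::'a) \<in> ball_v ord 0 0"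
    by (auto simp: mem_ball_v_iff ord_ge_def)
  obtain r0 where r0: "r0 \<in> residues" "0 - r0 \<in> ball_v ord 0 1"
    using residues(4)[OF mem(1)] by blast
  obtain r1 where r1: "r1 \<in> residues" "1 - r1 \<in> ball_v ord 0 1"
    using residues(4)[OF mem(2)] by blast
  have "r0 \<noteq> r1"
  proof
    assume "r0 = r1"
    have "ord_ge ord (1 - r1) 1" "ord_ge ord (0 - r0) 1"
      using r0 r1 by (simp_all add: mem_ball_v_iff)
    then have "ord_ge ord ((1 - r1) - (0 - r0)) 1"
      by (rule ord_ge_diff)
    then show False using \<open>r0 = r1\<close> by (simp add: ord_ge_def)
  qed
  then have "card {r0, r1} \<le> card residues"
    using r0 r1 residues(1) by (intro card_mono) auto
  then show ?thesis using \<open>r0 \<noteq> r1\<close> residues(2) by simp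
qed

lemma ball_v_eq_Union_residues:
  "ball_v ord a n = (\<Union>r\<in>residues. ball_v ord (a + w powi n * r) (n + 1))"
proof (intro equalityI subsetI)
  fix x assume x: "x \<in> ball_v ord a n"
  define y where "y = (x - a) / w powi n"
  have xy: "x - a = w powi n * y"
    using w_nonzero by (simp add: y_def)
  have "y \<in> ball_v ord 0 0"
    using x ord_ge_w_power_int_mult[of n y n] by (simp add: mem_ball_v_iff xy)
  then obtain r where r: "r \<in> residues" "y - r \<in> ball_v ord 0 1"
    using residues(4) by blast
  have "ord_ge ord (w powi n * (y - r)) (n + 1)"
    using ord_ge_mult[OF ord_ge_w_power_int, of "y - r" 1 n] r(2) by (simp add: mem_ball_v_iff)
  moreover have "w powi n * (y - r) = x - (a + w powi n * r)"
    using xy by (simp add: algebra_simps)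
  ultimately show "x \<in> (\<Union>r\<in>residues. ball_v ord (a + w powi n * r) (n + 1))"
    using r(1) by (auto simp: mem_ball_v_iff)
next
  fix x assume "x \<in> (\<Union>r\<in>residues. ball_v ord (a + w powi n * r) (n + 1))"
  then obtain r where r: "r \<in> residues" "x \<in> ball_v ord (a + w powi n * r) (n + 1)"
    by blast
  have "ord_ge ord (w powi n * r) (n + 0)"
    using r(1) residues(3) by (intro ord_ge_mult ord_ge_w_power_int) (auto simp: mem_ball_v_iff)
  then have "a + w powi n * r \<in> ball_v ord a n"
    by (simp add: mem_ball_v_iff)
  from ball_v_subset[OF this, of "n + 1"] r(2) show "x \<in> ball_v ord a n"
    by auto
qed

lemma disjoint_family_on_residue_balls:
  "disjoint_family_on (\<lambda>r. ball_v ord (a + w powi n * r) (n + 1)) residues"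
  unfolding disjoint_family_on_def
proof (intro ballI impI)
  fix r1 r2 assume r: "r1 \<in> residues" "r2 \<in> residues" "r1 \<noteq> r2"
  show "ball_v ord (a + w powi n * r1) (n + 1) \<inter> ball_v ord (a + w powi n * r2) (n + 1) = {}"
  proof (rule ccontr)
    assume "\<not> ?thesis"
    then obtain x where "x \<in> ball_v ord (a + w powi n * r1) (n + 1)"
      "x \<in> ball_v ord (a + w powi n * r2) (n + 1)"
      by blast
    then have "ord_ge ord (x - (a + w powi n * r2)) (n + 1)" "ord_ge ord (x - (a + w powi n * r1)) (n + 1)"
      by (simp_all only: mem_ball_v_iff)
    then have "ord_ge ord ((x - (a + w powi n * r2)) - (x - (a + w powi n * r1))) (n + 1)"
      by (rule ord_ge_diff)
    then have "ord_ge ord (w powi n * (r1 - r2)) (n + 1)"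
      by (simp add: algebra_simps)
    then have "r1 - r2 \<in> ball_v ord 0 1"
      using ord_ge_w_power_int_mult by (fastforce simp: mem_ball_v_iff)
    moreover have "r1 \<in> ball_v ord 0 0"
      using r residues(3) by auto
    ultimately show False
      using residues(4)[of r1] r by (auto simp: mem_ball_v_iff)
  qed
qed

lemma ball_v_finite_cover:
  "n \<le> N \<Longrightarrow> \<exists>C. finite C \<and> ball_v ord a n \<subseteq> (\<Union>c\<in>C. ball_v ord c N)"
proof (induction "nat (N - n)" arbitrary: a n)
  case 0
  then show ?case by (intro exI[of _ "{a}"]) auto
next
  case (Suc d)
  have "\<exists>C. finite C \<and> ball_v ord (a + w powi n * r) (n + 1) \<subseteq> (\<Union>c\<in>C. ball_v ord c N)" for r
    using Suc by (intro Suc.hyps) auto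
  then obtain C where C: "\<And>r. finite (C r) \<and>
      ball_v ord (a + w powi n * r) (n + 1) \<subseteq> (\<Union>c\<in>C r. ball_v ord c N)"
    by metis
  show ?case
  proof (intro exI conjI)
    show "finite (\<Union>r\<in>residues. C r)" using C residues(1) by auto
    show "ball_v ord a n \<subseteq> (\<Union>c\<in>(\<Union>r\<in>residues. C r). ball_v ord c N)"
      by (subst ball_v_eq_Union_residues) (use C in blast)
  qed
qed

end

section \<open>Haar measure of balls and invariance of integrals\<close>

locale local_field_haar = local_field +
  fixes M :: "'a measure"
  assumes haar: "is_haar ord M"
begin

lemma sets_ball_v [measurable, simp]: "ball_v ord a n \<in> sets M"
  using haar unfolding is_haar_def by auto

lemma emeasure_ball_v_eq_center_0: "emeasure M (ball_v ord a n) = emeasure M (ball_v ord 0 n)"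
proof -
  have "ball_v ord a n = (\<lambda>x. a + x) ` ball_v ord 0 n"
  proof (rule set_eqI)
    fix x
    show "x \<in> ball_v ord a n \<longleftrightarrow> x \<in> (\<lambda>x. a + x) ` ball_v ord 0 n"
    proof
      assume "x \<in> ball_v ord a n"
      then have "x - a \<in> ball_v ord 0 n" by (simp add: mem_ball_v_iff)
      then show "x \<in> (\<lambda>x. a + x) ` ball_v ord 0 n" by (rule rev_image_eqI) simp
    qed (auto simp: mem_ball_v_iff)
  qed
  moreover have "emeasure M ((\<lambda>x. a + x) ` ball_v ord 0 n) = emeasure M (ball_v ord 0 n)"
    using haar sets_ball_v unfolding is_haar_def by blast
  ultimately show ?thesis by simp
qed

lemma emeasure_ball_v_Suc: "emeasure M (ball_v ord 0 n) = of_nat q * emeasure M (ball_v ord 0 (n + 1))"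
proof -
  have "emeasure M (ball_v ord 0 n) =
      (\<Sum>r\<in>residues. emeasure M (ball_v ord (0 + w powi n * r) (n + 1)))"
    by (subst ball_v_eq_Union_residues[of 0 n], rule sum_emeasure[symmetric])
      (auto simp: disjoint_family_on_residue_balls[of 0 n, simplified] residues)
  also have "\<dots> = (\<Sum>r\<in>residues. emeasure M (ball_v ord 0 (n + 1)))"
    by (intro sum.cong refl) (rule emeasure_ball_v_eq_center_0)
  finally show ?thesis using residues(2) by simp
qed

lemma emeasure_ball_v_nat:
  "emeasure M (ball_v ord 0 (int k)) = ennreal (real q powr (- real k)) \<and>
   emeasure M (ball_v ord 0 (- int k)) = ennreal (real q powr (real k))"
proof (induction k)
  case 0
  have "emeasure M (ball_v ord 0 0) = 1"
    using haar by (simp add: is_haar_def)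
  then show ?case using q_ge_2 by simp
next
  case (Suc k)
  have q: "real q > 0" using q_ge_2 by simp
  have "ennreal (real q) * emeasure M (ball_v ord 0 (int k + 1)) =
        ennreal (real q) * ennreal (real q powr (- real (Suc k)))"
  proof -
    have "ennreal (real q) * ennreal (real q powr (- real (Suc k))) =
          ennreal (real q * real q powr (- real (Suc k)))"
      using q by (simp add: ennreal_mult)
    also have "real q * real q powr (- real (Suc k)) = real q powr (- real k)"
      using q by (simp add: powr_diff powr_minus field_simps powr_add)
    finally show ?thesis
      using Suc.IH emeasure_ball_v_Suc[of "int k"] by (simp add: ennreal_of_nat_eq_real_of_nat)
  qed
  then have "emeasure M (ball_v ord 0 (int (Suc k))) = ennreal (real q powr (- real (Suc k)))"
    using q by (subst (asm) ennreal_mult_cancel_left) (auto simp: add.commute)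
  moreover have "emeasure M (ball_v ord 0 (- int (Suc k))) = ennreal (real q) * ennreal (real q powr (real k))"
    using emeasure_ball_v_Suc[of "- int (Suc k)"] Suc.IH by (simp add: ennreal_of_nat_eq_real_of_nat)
  moreover have "ennreal (real q) * ennreal (real q powr (real k)) = ennreal (real q powr (real (Suc k)))"
    using q by (simp add: ennreal_mult[symmetric] powr_add field_simps)
  ultimately show ?case by simp
qed

lemma emeasure_ball_v: "emeasure M (ball_v ord a n) = ennreal (real q powr (- of_int n))"
proof (cases "n \<ge> 0")
  case True
  then obtain k where "n = int k" by (metis nonneg_int_cases)
  then show ?thesis using emeasure_ball_v_nat[of k] emeasure_ball_v_eq_center_0[of a n] by simp
next
  case False
  then obtain k where "n = - int k" by (metis neg_int_cases less_imp_le not_le minus_minus)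
  then show ?thesis using emeasure_ball_v_nat[of k] emeasure_ball_v_eq_center_0[of a n] by simp
qed

lemma measure_ball_v: "measure M (ball_v ord a n) = real q powr (- of_int n)"
  by (simp add: measure_def emeasure_ball_v)

lemma emeasure_ball_v_finite: "emeasure M (ball_v ord a n) < \<infinity>"
  by (simp add: emeasure_ball_v)

lemma integral_indicator_ball_v:
  "integral\<^sup>L M (\<lambda>x. indicator (ball_v ord a n) x *\<^sub>R (c::complex)) = measure M (ball_v ord a n) *\<^sub>R c"
  using emeasure_ball_v_finite by (subst integral_scaleR_left) auto

lemma integrable_indicator_ball_v: "integrable M (\<lambda>x. indicator (ball_v ord a n) x *\<^sub>R (c::complex))"
  using emeasure_ball_v_finite by auto

lemma affine_mem_ball_v_iff:
  assumes "u \<noteq> 0" "ord u = 0"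
  shows "u * x + t \<in> ball_v ord a n \<longleftrightarrow> x \<in> ball_v ord ((a - t) / u) n"
proof -
  have "u * x + t - a = u * (x - (a - t) / u)"
    using assms(1) by (simp add: field_simps)
  then show ?thesis using ord_ge_unit_mult[OF assms] by (simp add: mem_ball_v_iff)
qed

definition invariant_mod :: "int \<Rightarrow> ('a \<Rightarrow> complex) \<Rightarrow> bool" where
  "invariant_mod N h \<longleftrightarrow> (\<forall>x y. ord_ge ord y N \<longrightarrow> h (x + y) = h x)"

text \<open>Induction on \<open>N - n\<close>: at level \<open>n = N\<close> the function is a multiple of an indicator
  of a ball, and a ball of radius \<open>n\<close> splits into \<open>q\<close> balls of radius \<open>n + 1\<close>.\<close>

lemma integral_unit_affine_aux:
  fixes h :: "'a \<Rightarrow> complex"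
  assumes u: "u \<noteq> 0" "ord u = 0"
  shows "N - n = int d \<Longrightarrow> (\<forall>x. x \<notin> ball_v ord a n \<longrightarrow> h x = 0) \<Longrightarrow> invariant_mod N h \<Longrightarrow>
    integrable M h \<and> integrable M (\<lambda>x. h (u * x + t)) \<and>
    integral\<^sup>L M (\<lambda>x. h (u * x + t)) = integral\<^sup>L M h"
proof (induction d arbitrary: a n h)
  case 0
  then have nN: "n = N" by simp
  define c where "c = h a"
  have h_eq: "h x = indicator (ball_v ord a N) x *\<^sub>R c" for x
  proof (cases "x \<in> ball_v ord a N")
    case True
    then have "ord_ge ord (x - a) N" by (simp add: mem_ball_v_iff)
    then have "h (a + (x - a)) = h a"
      using 0(3) unfolding invariant_mod_def by blast
    then show ?thesis using True by (simp add: c_def)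
  qed (use 0(2) nN in auto)
  have "(\<lambda>x. h (u * x + t)) = (\<lambda>x. indicator (ball_v ord ((a - t) / u) N) x *\<^sub>R c)"
    using h_eq affine_mem_ball_v_iff[OF u] by (auto simp: indicator_def)
  moreover have "h = (\<lambda>x. indicator (ball_v ord a N) x *\<^sub>R c)"
    using h_eq by auto
  ultimately show ?case
    using integrable_indicator_ball_v integral_indicator_ball_v measure_ball_v by simp
next
  case (Suc d)
  define B where "B r = ball_v ord (a + w powi n * r) (n + 1)" for r
  define hr where "hr r x = indicator (B r) x *\<^sub>R h x" for r x
  have h_sum: "h = (\<lambda>x. \<Sum>r\<in>residues. hr r x)"
  proof
    fix x
    have "(\<Sum>r\<in>residues. hr r x) = (\<Sum>r\<in>residues. indicator (B r) x) *\<^sub>R h x"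
      unfolding hr_def by (simp add: scaleR_sum_left)
    also have "(\<Sum>r\<in>residues. indicator (B r) x) = (indicator (ball_v ord a n) x :: real)"
      unfolding B_def ball_v_eq_Union_residues[of a n]
      by (rule indicator_UN_disjoint[symmetric, OF residues(1) disjoint_family_on_residue_balls])
    finally show "h x = (\<Sum>r\<in>residues. hr r x)"
      using Suc.prems(2) by (cases "x \<in> ball_v ord a n") auto
  qed
  have IH: "integrable M (hr r) \<and> integrable M (\<lambda>x. hr r (u * x + t)) \<and>
      integral\<^sup>L M (\<lambda>x. hr r (u * x + t)) = integral\<^sup>L M (hr r)" for r
  proof (rule Suc.IH[of "n + 1"])
    show "N - (n + 1) = int d" using Suc.prems(1) by simp
    show "\<forall>x. x \<notin> ball_v ord (a + w powi n * r) (n + 1) \<longrightarrow> hr r x = 0"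
      by (simp add: hr_def B_def)
    show "invariant_mod N (hr r)"
      unfolding invariant_mod_def
    proof (intro allI impI)
      fix x y assume y: "ord_ge ord y N"
      have y': "ord_ge ord y (n + 1)" using y Suc.prems(1) ord_ge_mono by fastforce
      have "x + y \<in> B r \<longleftrightarrow> x \<in> B r"
      proof -
        have "x + y - c = (x - c) + y" "x - c = (x + y - c) + (- y)" for c by simp_all
        then show ?thesis unfolding B_def mem_ball_v_iff using ord_ge_add y' by (metis ord_ge_uminus)
      qed
      then show "hr r (x + y) = hr r x"
        using Suc.prems(3) y by (simp add: hr_def invariant_mod_def indicator_def)
    qed
  qed
  have "integrable M (\<lambda>x. \<Sum>r\<in>residues. hr r x)"
    "integrable M (\<lambda>x. \<Sum>r\<in>residues. hr r (u * x + t))"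
    using IH by (auto intro!: Bochner_Integration.integrable_sum)
  moreover have "integral\<^sup>L M (\<lambda>x. \<Sum>r\<in>residues. hr r (u * x + t)) =
      integral\<^sup>L M (\<lambda>x. \<Sum>r\<in>residues. hr r x)"
    using IH by (simp add: Bochner_Integration.integral_sum)
  ultimately show ?case
    by (simp only: h_sum)
qed

lemma
  fixes h :: "'a \<Rightarrow> complex"
  assumes "n \<le> N" "\<And>x. x \<notin> ball_v ord a n \<Longrightarrow> h x = 0" "invariant_mod N h"
  shows integrable_invariant_mod: "integrable M h"
    and integral_unit_affine:
      "u \<noteq> 0 \<Longrightarrow> ord u = 0 \<Longrightarrow> integral\<^sup>L M (\<lambda>x. h (u * x + t)) = integral\<^sup>L M h"
proof -
  show "integrable M h"
    using integral_unit_affine_aux[of 1 N n "nat (N - n)" a h 0] assms by simp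
  show "integral\<^sup>L M (\<lambda>x. h (u * x + t)) = integral\<^sup>L M h" if "u \<noteq> 0" "ord u = 0"
    using integral_unit_affine_aux[of u N n "nat (N - n)" a h t] that assms by simp
qed

end

section \<open>Quasi-characters and their conductor\<close>

text \<open>No small subgroups in \<open>\<complex>\<^sup>*\<close>: if \<open>c \<noteq> 1\<close> then \<open>|c^(2^j) - 1|\<close> grows
  at least like \<open>(3/2)\<^sup>j\<close> as long as it stays below \<open>1/2\<close>.\<close>

lemma complex_eq_1_if_powers_near_1:
  fixes c :: complex
  assumes near: "\<And>k::nat. cmod (c ^ k - 1) < 1/2"
  shows "c = 1"
proof (rule ccontr)
  assume c: "c \<noteq> 1"
  define d where "d j = cmod (c ^ (2 ^ j) - 1)" for j :: nat
  have step: "d (Suc j) \<ge> 3/2 * d j" for j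
  proof -
    have e: "c ^ (2 ^ Suc j) - 1 = (c ^ (2 ^ j) - 1) * ((c ^ (2 ^ j) - 1) + 2)"
      by (simp add: power_mult algebra_simps power2_eq_square)
    have "cmod ((c ^ (2 ^ j) - 1) + 2) \<ge> 2 - cmod (c ^ (2 ^ j) - 1)"
      using norm_triangle_ineq2[of 2 "- (c ^ (2 ^ j) - 1)"] by (simp add: add.commute norm_minus_commute)
    then have "cmod ((c ^ (2 ^ j) - 1) + 2) \<ge> 3/2"
      using near[of "2^j"] by linarith
    then have "d j * (3/2) \<le> d j * cmod ((c ^ (2 ^ j) - 1) + 2)"
      by (rule mult_left_mono) (simp add: d_def)
    moreover have "d (Suc j) = d j * cmod ((c ^ (2 ^ j) - 1) + 2)"
      unfolding d_def e by (simp add: norm_mult)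
    ultimately show ?thesis by (simp add: mult.commute)
  qed
  have lower: "d j \<ge> (3/2) ^ j * d 0" for j
  proof (induction j)
    case (Suc j)
    then show ?case using step[of j] by (simp add: mult_left_mono order_trans)
  qed simp
  have "d 0 > 0" using c by (simp add: d_def)
  moreover obtain j where "1 / d 0 < (3/2::real) ^ j"
    using real_arch_pow[of "3/2"] by auto
  ultimately have "(3/2) ^ j * d 0 > 1" by (simp add: field_simps)
  moreover have "d j < 1/2" using near by (simp add: d_def)
  ultimately show False using lower[of j] by linarith
qed

context local_field
begin

lemma quasi_char_mult: "quasi_char ord q chi \<Longrightarrow> x \<noteq> 0 \<Longrightarrow> y \<noteq> 0 \<Longrightarrow> chi (x * y) = chi x * chi y"
  by (simp add: quasi_char_def)

lemma quasi_char_nonzero: "quasi_char ord q chi \<Longrightarrow> x \<noteq> 0 \<Longrightarrow> chi x \<noteq> 0"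
  by (simp add: quasi_char_def)

lemma quasi_char_1: "quasi_char ord q chi \<Longrightarrow> chi 1 = 1"
  using quasi_char_mult[of chi 1 1] quasi_char_nonzero[of chi 1] by simp

lemma quasi_char_power: "quasi_char ord q chi \<Longrightarrow> x \<noteq> 0 \<Longrightarrow> chi (x ^ k) = chi x ^ k"
  by (induction k) (simp_all add: quasi_char_1 quasi_char_mult)

lemma quasi_char_power_int: "quasi_char ord q chi \<Longrightarrow> x \<noteq> 0 \<Longrightarrow> chi (x powi k) = chi x powi k"
proof (cases "k \<ge> 0")
  case False
  assume chi: "quasi_char ord q chi" and x: "x \<noteq> 0"
  have "chi (inverse x) = inverse (chi x)"
    using quasi_char_mult[OF chi, of x "inverse x"] quasi_char_1[OF chi] quasi_char_nonzero[OF chi x] x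
    by (simp add: field_simps)
  then show ?thesis
    using False x quasi_char_power[OF chi] by (simp add: power_int_def)
qed (simp add: power_int_def quasi_char_power)

lemma mem_U_0_iff: "x \<in> U_n ord 0 \<longleftrightarrow> x \<noteq> 0 \<and> ord x = 0"
  by (simp add: U_n_def)

lemma mem_U_n_iff: "n > 0 \<Longrightarrow> x \<in> U_n ord n \<longleftrightarrow> ord_ge ord (x - 1) (int n)"
  by (auto simp: U_n_def ord_ge_def)

lemma U_n_subset_U_0: "x \<in> U_n ord n \<Longrightarrow> x \<noteq> 0 \<and> ord x = 0"
proof (cases "n = 0")
  case False
  assume "x \<in> U_n ord n"
  then have x1: "ord_ge ord (x - 1) (int n)" using False by (simp add: mem_U_n_iff)
  have "x \<noteq> 0"
    using x1 False by (auto simp: ord_ge_def)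
  moreover have "ord x = 0"
  proof (cases "x = 1")
    case False
    then have "ord 1 < ord (x - 1)"
      using x1 \<open>n \<noteq> 0\<close> by (auto simp: ord_ge_def)
    from ord_add_eq_left(2)[OF _ _ this] False show ?thesis by simp
  qed simp
  ultimately show ?thesis ..
qed (simp add: mem_U_0_iff)

lemma U_n_antimono: "m \<le> n \<Longrightarrow> U_n ord n \<subseteq> U_n ord m"
proof
  fix x assume mn: "m \<le> n" and x: "x \<in> U_n ord n"
  show "x \<in> U_n ord m"
  proof (cases "m = 0")
    case True
    then show ?thesis using U_n_subset_U_0[OF x] by (simp add: mem_U_0_iff)
  next
    case False
    then show ?thesis using x mn by (auto simp: mem_U_n_iff intro: ord_ge_mono)
  qed
qed

lemma U_n_power: "n > 0 \<Longrightarrow> x \<in> U_n ord n \<Longrightarrow> x ^ k \<in> U_n ord n"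
proof (induction k)
  case (Suc k)
  then have a: "ord_ge ord (x - 1) n" "ord_ge ord (x ^ k - 1) n"
    by (simp_all add: mem_U_n_iff)
  have "ord_ge ord ((x - 1) * (x ^ k - 1)) n"
    using ord_ge_mult[OF a] by (rule ord_ge_mono) simp
  moreover have "x ^ Suc k - 1 = (x - 1) + (x ^ k - 1) + (x - 1) * (x ^ k - 1)"
    by (simp add: algebra_simps)
  ultimately have "ord_ge ord (x ^ Suc k - 1) n"
    using a by (simp only:) (intro ord_ge_add)
  then show ?case using Suc.prems by (simp add: mem_U_n_iff)
qed (simp add: mem_U_n_iff)

text \<open>Continuity at \<open>1\<close> together with the absence of small subgroups in \<open>\<complex>\<^sup>*\<close>
  forces \<open>\<chi>\<close> to be trivial on some \<open>U\<^sup>(\<^sup>n\<^sup>)\<close>; in particular the conductor is well defined.\<close>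

lemma quasi_char_trivial_on_U_n:
  assumes chi: "quasi_char ord q chi"
  shows "\<exists>n. \<forall>x \<in> U_n ord n. chi x = 1"
proof -
  obtain d where d: "d > 0" "\<And>y. y \<noteq> 0 \<Longrightarrow> absv ord q (y - 1) < d \<Longrightarrow> cmod (chi y - 1) < 1/2"
    using chi quasi_char_1[OF chi] unfolding quasi_char_def
    by (metis half_gt_zero zero_less_one one_neq_zero)
  have q: "real q \<ge> 2" using q_ge_2 by simp
  obtain n0 where "(1 / real q) ^ n0 < d"
    using real_arch_pow_inv[OF d(1), of "1 / real q"] q by auto
  moreover have "(1 / real q) ^ Suc n0 \<le> (1 / real q) ^ n0"
    using q by (intro power_decreasing) auto
  ultimately have "(1 / real q) ^ Suc n0 < d" by linarith
  moreover have "real q powr (- real (Suc n0)) = (1 / real q) ^ Suc n0"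
    using q by (simp add: powr_minus powr_realpow divide_inverse power_inverse del: of_nat_Suc)
  ultimately have small: "real q powr (- real (Suc n0)) < d" by simp
  have "chi x = 1" if x: "x \<in> U_n ord (Suc n0)" for x
  proof (rule complex_eq_1_if_powers_near_1)
    fix k
    have xk: "x ^ k \<in> U_n ord (Suc n0)" by (rule U_n_power[OF _ x]) simp
    then have nz: "x ^ k \<noteq> 0" using U_n_subset_U_0 by blast
    have "absv ord q (x ^ k - 1) < d"
    proof (cases "x ^ k = 1")
      case False
      then have "ord (x ^ k - 1) \<ge> int (Suc n0)"
        using xk by (simp add: mem_U_n_iff ord_ge_def del: of_nat_Suc)
      then have "absv ord q (x ^ k - 1) \<le> real q powr (- real (Suc n0))"
        using False q by (simp add: absv_def del: of_nat_Suc)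
      then show ?thesis using small by linarith
    qed (use d in \<open>simp add: absv_def\<close>)
    then have "cmod (chi (x ^ k) - 1) < 1/2" using d(2) nz by blast
    then show "cmod (chi x ^ k - 1) < 1/2"
      using quasi_char_power[OF chi] U_n_subset_U_0[OF x] by simp
  qed
  then show ?thesis by blast
qed

lemma quasi_char_trivial_on_U_conductor:
  "quasi_char ord q chi \<Longrightarrow> x \<in> U_n ord (conductor_exp ord chi) \<Longrightarrow> chi x = 1"
  unfolding conductor_exp_def using LeastI_ex[OF quasi_char_trivial_on_U_n] by blast

lemma unramified_trivial_on_U_0:
  "quasi_char ord q eta \<Longrightarrow> conductor_exp ord eta = 0 \<Longrightarrow> \<forall>x\<in>U_n ord 0. eta x = 1"
  using quasi_char_trivial_on_U_conductor by simp

lemma nontrivial_on_U_n_below_conductor: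
  "m < conductor_exp ord chi \<Longrightarrow> \<exists>x \<in> U_n ord m. chi x \<noteq> 1"
  unfolding conductor_exp_def using not_less_Least by blast

lemma conductor_exp_eq_0_iff:
  assumes "quasi_char ord q chi"
  shows "conductor_exp ord chi = 0 \<longleftrightarrow> (\<forall>x. x \<noteq> 0 \<and> ord x = 0 \<longrightarrow> chi x = 1)"
proof
  assume "conductor_exp ord chi = 0"
  then show "\<forall>x. x \<noteq> 0 \<and> ord x = 0 \<longrightarrow> chi x = 1"
    using quasi_char_trivial_on_U_conductor[OF assms] by (auto simp: mem_U_0_iff)
next
  assume "\<forall>x. x \<noteq> 0 \<and> ord x = 0 \<longrightarrow> chi x = 1"
  then show "conductor_exp ord chi = 0"
    unfolding conductor_exp_def by (intro Least_eq_0) (auto simp: mem_U_0_iff)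
qed

lemma unramified_quasi_char_eq:
  assumes chi: "quasi_char ord q chi" and unram: "conductor_exp ord chi = 0" and x: "x \<noteq> 0"
  shows "chi x = chi w powi ord x"
proof -
  define u where "u = x / w powi ord x"
  have u: "u \<noteq> 0" "ord u = 0" using x w_nonzero by (simp_all add: u_def ord_divide)
  then have "chi u = 1" using unram conductor_exp_eq_0_iff[OF chi] by blast
  moreover have "x = w powi ord x * u" using w_nonzero by (simp add: u_def)
  ultimately have "chi x = chi (w powi ord x)"
    using quasi_char_mult[OF chi, of "w powi ord x" u] u w_nonzero by simp
  then show ?thesis using quasi_char_power_int[OF chi w_nonzero] by simp
qed

end

section \<open>Integrals of \<open>\<chi> \<psi> \<beta>\<^sup>o\<^sup>r\<^sup>d\<close> over shells\<close>

locale shell_integrals = local_field_haar +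
  fixes psi chi :: "'a \<Rightarrow> complex" and beta :: complex
  assumes add_char: "add_char ord psi" and quasi_char: "quasi_char ord q chi"
begin

abbreviation f :: nat where "f \<equiv> conductor_exp ord chi"

definition shell :: "int \<Rightarrow> 'a set" where
  "shell k = {x. x \<noteq> 0 \<and> ord x = k}"

definition integrand :: "'a \<Rightarrow> complex" where
  "integrand x = chi x * psi x * beta powi ord x"

definition shell_integrand :: "int \<Rightarrow> 'a \<Rightarrow> complex" where
  "shell_integrand k x = indicator (shell k) x *\<^sub>R integrand x"

lemma psi_add: "psi (x + y) = psi x * psi y"
  using add_char by (simp add: add_char_def)

lemma psi_eq_1: "ord_ge ord x 0 \<Longrightarrow> psi x = 1"
  using add_char by (simp add: add_char_def mem_ball_v_iff)

lemma psi_nontrivial: "\<exists>y. ord_ge ord y (-1) \<and> psi y \<noteq> 1"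
  using add_char by (auto simp: add_char_def mem_ball_v_iff)

text \<open>Translating by \<open>y\<close> with \<open>ord y \<ge> k + max 1 f\<close> multiplies a point of the shell by a
  unit in \<open>U\<^sup>(\<^sup>f\<^sup>)\<close>.\<close>

lemma shell_translate:
  assumes x: "x \<in> shell k" and y: "ord_ge ord y m" and m: "m \<ge> k + 1" "m \<ge> k + int f"
  shows "x + y \<in> shell k \<and> chi (x + y) = chi x"
proof (cases "y = 0")
  case False
  have x0: "x \<noteq> 0" "ord x = k" using x by (auto simp: shell_def)
  have "ord y \<ge> m" using y False by (simp add: ord_ge_def)
  then have oyx: "ord (y / x) \<ge> m - k" and lt: "ord x < ord y"
    using x0 False m by (simp_all add: ord_divide)
  have u: "1 + y / x \<in> U_n ord f"
  proof (cases "f = 0")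
    case True
    have "ord 1 < ord (y / x)" using oyx m by simp
    from ord_add_eq_left[OF _ _ this] show ?thesis
      using True False x0 by (simp add: mem_U_0_iff)
  next
    case False
    have "ord_ge ord (y / x) (int f)" using oyx m by (simp add: ord_ge_def)
    then show ?thesis using False by (simp add: mem_U_n_iff)
  qed
  have "x + y = x * (1 + y / x)" using x0 by (simp add: field_simps)
  then have "chi (x + y) = chi x"
    using quasi_char_trivial_on_U_conductor[OF quasi_char u] U_n_subset_U_0[OF u]
      quasi_char_mult[OF quasi_char x0(1)] by simp
  then show ?thesis using ord_add_eq_left[OF x0(1) False lt] x0 by (simp add: shell_def)
qed (use x in simp)

lemma shell_translate_not:
  assumes "x \<notin> shell k" "ord_ge ord y m" "m \<ge> k + 1" "m \<ge> k + int f"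
  shows "x + y \<notin> shell k"
  using shell_translate[of "x + y" k "- y" m] assms by auto

lemma shell_integrand_translate:
  assumes y: "ord_ge ord y m" and m: "m \<ge> k + 1" "m \<ge> k + int f"
  shows "shell_integrand k (x + y) = psi y * shell_integrand k x"
proof (cases "x \<in> shell k")
  case True
  note translate = shell_translate[OF True y m]
  then have "ord (x + y) = ord x" using True by (simp add: shell_def)
  then show ?thesis
    using translate True by (simp add: shell_integrand_def integrand_def psi_add)
next
  case False
  then show ?thesis
    using shell_translate_not[OF False y m] by (simp add: shell_integrand_def)
qed

definition level :: "int \<Rightarrow> int" where
  "level k = max (k + 1) (max 0 (k + int f))"

lemma invariant_mod_shell_integrand: "invariant_mod (level k) (shell_integrand k)"
  unfolding invariant_mod_def
proof (intro allI impI)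
  fix x y assume y: "ord_ge ord y (level k)"
  have "psi y = 1" using psi_eq_1 ord_ge_mono[OF y] by (simp add: level_def)
  then show "shell_integrand k (x + y) = shell_integrand k x"
    using shell_integrand_translate[OF y] by (simp add: level_def)
qed

lemma shell_integrand_outside_ball: "x \<notin> ball_v ord 0 k \<Longrightarrow> shell_integrand k x = 0"
  by (auto simp: shell_integrand_def shell_def mem_ball_v_iff ord_ge_def)

lemma level_ge: "k \<le> level k"
  by (simp add: level_def)

lemma integrable_shell_integrand: "integrable M (shell_integrand k)"
  using integrable_invariant_mod[OF level_ge] shell_integrand_outside_ball invariant_mod_shell_integrand
  by blast

lemma integral_shell_integrand_affine:
  "u \<noteq> 0 \<Longrightarrow> ord u = 0 \<Longrightarrow>
   integral\<^sup>L M (\<lambda>x. shell_integrand k (u * x + t)) = integral\<^sup>L M (shell_integrand k)"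
  using integral_unit_affine[OF level_ge] shell_integrand_outside_ball invariant_mod_shell_integrand
  by blast

text \<open>Below the conductor the shell integral is killed by a translation on which \<open>\<psi>\<close> is
  nontrivial, above it by a unit on which \<open>\<chi>\<close> is nontrivial.\<close>

lemma integral_shell_integrand_below_conductor:
  assumes "f > 0" "k < - int f"
  shows "integral\<^sup>L M (shell_integrand k) = 0"
proof -
  obtain y where y: "ord_ge ord y (-1)" "psi y \<noteq> 1" using psi_nontrivial by blast
  have "integral\<^sup>L M (shell_integrand k) = integral\<^sup>L M (\<lambda>x. shell_integrand k (1 * x + y))"
    by (rule integral_shell_integrand_affine[symmetric]) simp_all
  also have "\<dots> = psi y * integral\<^sup>L M (shell_integrand k)"
    using shell_integrand_translate[OF y(1)] assms by simp
  finally show ?thesis using y(2) by (metis mult_cancel_right2)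
qed

lemma integral_shell_integrand_above_conductor:
  assumes "f > 0" "k > - int f"
  shows "integral\<^sup>L M (shell_integrand k) = 0"
proof -
  define m where "m = nat (- k)"
  have "m < f" using assms by (cases "k \<ge> 0") (auto simp: m_def nat_less_iff)
  then obtain u where u: "u \<in> U_n ord m" "chi u \<noteq> 1"
    using nontrivial_on_U_n_below_conductor by blast
  have u0: "u \<noteq> 0" "ord u = 0" using U_n_subset_U_0[OF u(1)] by auto
  have u1: "ord_ge ord (u - 1) (- k)"
  proof (cases "m = 0")
    case True
    have "ord_ge ord (u - 1) 0" using u0 by (intro ord_ge_diff) (auto simp: ord_ge_def)
    then show ?thesis using True by (auto simp: m_def intro: ord_ge_mono)
  next
    case False
    then show ?thesis using u(1) by (simp add: mem_U_n_iff m_def)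
  qed
  have "shell_integrand k (u * x) = chi u * shell_integrand k x" for x
  proof (cases "x \<in> shell k")
    case True
    then have x0: "x \<noteq> 0" "ord x = k" by (auto simp: shell_def)
    have "ord_ge ord (x * (u - 1)) (k + - k)"
      using x0 u1 by (intro ord_ge_mult) (auto simp: ord_ge_def)
    then have "psi (x + x * (u - 1)) = psi x" by (simp add: psi_add psi_eq_1)
    moreover have "u * x = x + x * (u - 1)" by (simp add: algebra_simps)
    moreover have "u * x \<in> shell k" "ord (u * x) = k" using x0 u0 by (auto simp: shell_def ord_mult)
    ultimately show ?thesis
      using True x0 u0 quasi_char_mult[OF quasi_char u0(1) x0(1)]
      by (simp add: shell_integrand_def integrand_def)
  next
    case False
    then have "u * x \<notin> shell k" using u0 by (auto simp: shell_def ord_mult)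
    then show ?thesis using False by (simp add: shell_integrand_def)
  qed
  then have "integral\<^sup>L M (shell_integrand k) = chi u * integral\<^sup>L M (shell_integrand k)"
    using integral_shell_integrand_affine[OF u0, of k 0] by simp
  then show ?thesis using u(2) by (metis mult_cancel_right2)
qed

end

context shell_integrals
begin

definition annulus :: "nat \<Rightarrow> 'a set" where
  "annulus n = {x. x \<noteq> 0 \<and> - int n \<le> ord x \<and> ord x \<le> int n}"

lemma indicator_annulus_eq_sum:
  "(\<lambda>x. indicator (annulus n) x *\<^sub>R integrand x) = (\<lambda>x. \<Sum>k\<in>{- int n..int n}. shell_integrand k x)"
proof
  fix x
  have "shell_integrand k x = (if k = ord x then (if x \<noteq> 0 then integrand x else 0) else 0)" for k
    by (auto simp: shell_integrand_def shell_def indicator_def)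
  then show "indicator (annulus n) x *\<^sub>R integrand x = (\<Sum>k\<in>{- int n..int n}. shell_integrand k x)"
    by (auto simp: annulus_def indicator_def sum.delta')
qed

lemma set_integrable_annulus: "set_integrable M (annulus n) integrand"
  unfolding set_integrable_def indicator_annulus_eq_sum
  by (rule Bochner_Integration.integrable_sum) (rule integrable_shell_integrand)

lemma set_integral_annulus:
  "set_lebesgue_integral M (annulus n) integrand = (\<Sum>k\<in>{- int n..int n}. integral\<^sup>L M (shell_integrand k))"
  unfolding set_lebesgue_integral_def indicator_annulus_eq_sum
  by (rule Bochner_Integration.integral_sum) (rule integrable_shell_integrand)

lemma set_integral_annulus_ramified:
  assumes "f > 0" "n \<ge> f"
  shows "set_lebesgue_integral M (annulus n) integrand = integral\<^sup>L M (shell_integrand (- int f))"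
proof -
  have mem: "- int f \<in> {- int n..int n}" using assms by auto
  have "integral\<^sup>L M (shell_integrand k) = 0" if "k \<noteq> - int f" for k
    using that integral_shell_integrand_below_conductor integral_shell_integrand_above_conductor assms(1)
    by (cases "k < - int f") auto
  then show ?thesis
    unfolding set_integral_annulus by (subst sum.remove[OF _ mem]) auto
qed

definition ball_integral_psi :: "int \<Rightarrow> complex" where
  "ball_integral_psi k = integral\<^sup>L M (\<lambda>x. indicator (ball_v ord 0 k) x *\<^sub>R psi x)"

lemma indicator_ball_translate:
  "ord_ge ord y k \<Longrightarrow> x + y \<in> ball_v ord 0 k \<longleftrightarrow> x \<in> ball_v ord 0 k"
  using ord_ge_add[of x k y] ord_ge_add[of "x + y" k "- y"] by (auto simp: mem_ball_v_iff)

lemma invariant_mod_indicator_psi: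
  "invariant_mod (max k 0) (\<lambda>x. indicator (ball_v ord 0 k) x *\<^sub>R psi x)"
  unfolding invariant_mod_def
proof (intro allI impI)
  fix x y assume y: "ord_ge ord y (max k 0)"
  have "x + y \<in> ball_v ord 0 k \<longleftrightarrow> x \<in> ball_v ord 0 k"
    using indicator_ball_translate ord_ge_mono[OF y] by simp
  moreover have "psi y = 1"
    using psi_eq_1 ord_ge_mono[OF y] by simp
  ultimately show "indicator (ball_v ord 0 k) (x + y) *\<^sub>R psi (x + y) = indicator (ball_v ord 0 k) x *\<^sub>R psi x"
    by (simp add: psi_add indicator_def)
qed

lemma ball_integral_psi_nonneg: "k \<ge> 0 \<Longrightarrow> ball_integral_psi k = of_real (real q powr (- of_int k))"
proof -
  assume k: "k \<ge> 0"
  have "(\<lambda>x. indicator (ball_v ord 0 k) x *\<^sub>R psi x) = (\<lambda>x. indicator (ball_v ord 0 k) x *\<^sub>R (1::complex))"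
    using psi_eq_1 ord_ge_mono[of _ k 0] k by (intro ext) (auto simp: indicator_def mem_ball_v_iff)
  then show ?thesis
    by (simp add: ball_integral_psi_def integral_indicator_ball_v measure_ball_v scaleR_conv_of_real)
qed

text \<open>For \<open>k < 0\<close> the ball contains a point on which \<open>\<psi>\<close> is nontrivial, and translating
  by it shows that the integral vanishes.\<close>

lemma ball_integral_psi_neg: "k \<le> -1 \<Longrightarrow> ball_integral_psi k = 0"
proof -
  assume k: "k \<le> -1"
  obtain y where y: "ord_ge ord y (-1)" "psi y \<noteq> 1" using psi_nontrivial by blast
  define h where "h x = indicator (ball_v ord 0 k) x *\<^sub>R psi x" for x
  have "ball_integral_psi k = integral\<^sup>L M (\<lambda>x. h (1 * x + y))"
    unfolding h_def ball_integral_psi_def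
    by (rule integral_unit_affine[where a = 0 and n = k, OF _ _ invariant_mod_indicator_psi, symmetric]) auto
  also have "\<dots> = integral\<^sup>L M (\<lambda>x. psi y * h x)"
    using indicator_ball_translate[OF ord_ge_mono[OF y(1) k]] by (auto simp: psi_add indicator_def h_def mult.commute)
  also have "\<dots> = psi y * ball_integral_psi k"
    unfolding ball_integral_psi_def h_def by (rule integral_mult_right_zero)
  finally have "ball_integral_psi k = psi y * ball_integral_psi k" .
  then show ?thesis using y(2) by (metis mult_cancel_right2)
qed

lemma integral_shell_integrand_unramified:
  assumes f0: "f = 0"
  shows "integral\<^sup>L M (shell_integrand k) = (chi w * beta) powi k * (ball_integral_psi k - ball_integral_psi (k + 1))"
proof -
  have pointwise: "shell_integrand k x = (chi w * beta) powi k *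
      (indicator (ball_v ord 0 k) x *\<^sub>R psi x - indicator (ball_v ord 0 (k + 1)) x *\<^sub>R psi x)" for x
  proof (cases "x \<in> shell k")
    case True
    then have x: "x \<noteq> 0" "ord x = k" by (auto simp: shell_def)
    then have "chi x = chi w powi k" using unramified_quasi_char_eq[OF quasi_char f0] by simp
    then show ?thesis
      using x True by (simp add: shell_integrand_def integrand_def mem_ball_v_iff ord_ge_def power_int_mult_distrib)
  next
    case False
    then have "x \<in> ball_v ord 0 k \<longleftrightarrow> x \<in> ball_v ord 0 (k + 1)"
      by (auto simp: shell_def mem_ball_v_iff ord_ge_def)
    then show ?thesis using False by (simp add: shell_integrand_def indicator_def)
  qed
  then have "shell_integrand k = (\<lambda>x. (chi w * beta) powi k *
      (indicator (ball_v ord 0 k) x *\<^sub>R psi x - indicator (ball_v ord 0 (k + 1)) x *\<^sub>R psi x))"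
    by (simp add: fun_eq_iff)
  moreover have "integrable M (\<lambda>x. indicator (ball_v ord 0 k) x *\<^sub>R psi x)" for k
    by (rule integrable_invariant_mod[where a = 0 and n = k, OF _ _ invariant_mod_indicator_psi]) auto
  ultimately show ?thesis by (simp add: ball_integral_psi_def)
qed

text \<open>For \<open>f = 0\<close> only the shells \<open>k \<ge> -1\<close> contribute, and those with \<open>k \<ge> 0\<close> form a
  geometric series with ratio \<open>\<chi>(\<varpi>) \<beta> / q\<close>.\<close>

lemma unramified_annulus_limit:
  assumes f0: "f = 0" and small: "cmod (chi w * beta / of_nat q) < 1"
  shows "(\<lambda>n. set_lebesgue_integral M (annulus n) integrand) \<longlonglongrightarrow>
     - inverse (chi w * beta) + (1 - 1 / of_nat q) / (1 - chi w * beta / of_nat q)"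
proof -
  define r where "r = chi w * beta / of_nat q"
  define T where "T k = integral\<^sup>L M (shell_integrand k)" for k
  have q: "real q \<ge> 2" using q_ge_2 by simp
  have T_neg: "T k = 0" if "k \<le> -2" for k
    using that by (simp add: T_def integral_shell_integrand_unramified[OF f0] ball_integral_psi_neg)
  have T_m1: "T (-1) = - inverse (chi w * beta)"
    using q by (simp add: T_def integral_shell_integrand_unramified[OF f0] ball_integral_psi_neg
        ball_integral_psi_nonneg power_int_minus)
  have T_nat: "T (int j) = r ^ j * (1 - 1 / of_nat q)" for j
  proof -
    have pow: "real q powr (- real k) = (1 / real q) ^ k" for k
      using q by (simp add: powr_minus powr_realpow power_one_over inverse_eq_divide)
    have "ball_integral_psi (int j) - ball_integral_psi (int j + 1) = (1 / of_nat q) ^ j * (1 - 1 / of_nat q)"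
      using ball_integral_psi_nonneg[of "int j"] ball_integral_psi_nonneg[of "int (Suc j)"] pow[of j] pow[of "Suc j"]
      by (simp add: add.commute algebra_simps)
    then show ?thesis
      by (simp add: T_def r_def integral_shell_integrand_unramified[OF f0] power_divide)
  qed
  have sum_T: "(\<Sum>k\<in>{- int n..int n}. T k) = T (-1) + (\<Sum>j\<in>{0..n}. T (int j))" if "n \<ge> 1" for n
  proof -
    have "(\<Sum>k\<in>{- int n..int n}. T k) = (\<Sum>k\<in>insert (-1) (int ` {0..n}). T k)"
    proof (rule sum.mono_neutral_right)
      show "insert (-1) (int ` {0..n}) \<subseteq> {- int n..int n}" using that by auto
      show "\<forall>k\<in>{- int n..int n} - insert (-1) (int ` {0..n}). T k = 0"
      proof
        fix k assume k: "k \<in> {- int n..int n} - insert (-1) (int ` {0..n})"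
        have "\<not> 0 \<le> k"
        proof
          assume "0 \<le> k"
          then have "k = int (nat k)" "nat k \<in> {0..n}" using k by auto
          then show False using k by blast
        qed
        then show "T k = 0" using k T_neg by simp
      qed
    qed simp
    also have "\<dots> = T (-1) + (\<Sum>j\<in>{0..n}. T (int j))"
      by (subst sum.insert) (auto simp: sum.reindex)
    finally show ?thesis .
  qed
  have "(\<lambda>j. r ^ j * (1 - 1 / of_nat q)) sums (1 / (1 - r) * (1 - 1 / of_nat q))"
    by (rule sums_mult2, rule geometric_sums) (use small r_def in simp)
  then have "(\<lambda>n. \<Sum>j\<in>{0..n}. T (int j)) \<longlonglongrightarrow> (1 - 1 / of_nat q) / (1 - r)"
    unfolding sums_def' T_nat by simp
  then have "(\<lambda>n. T (-1) + (\<Sum>j\<in>{0..n}. T (int j))) \<longlonglongrightarrow> T (-1) + (1 - 1 / of_nat q) / (1 - r)"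
    by (intro tendsto_add tendsto_const)
  moreover have "\<forall>\<^sub>F n in sequentially.
      T (-1) + (\<Sum>j\<in>{0..n}. T (int j)) = set_lebesgue_integral M (annulus n) integrand"
    using eventually_ge_at_top[of 1]
  proof eventually_elim
    case (elim n)
    have "set_lebesgue_integral M (annulus n) integrand = (\<Sum>k\<in>{- int n..int n}. T k)"
      by (simp add: set_integral_annulus T_def)
    then show ?case using sum_T[OF elim] by simp
  qed
  ultimately show ?thesis
    unfolding T_m1 r_def by (rule Lim_transform_eventually)
qed

end

section \<open>Gauss sums\<close>

context local_field_haar
begin

lemma U_0_eq_ball_v_diff: "U_n ord 0 = ball_v ord 0 0 - ball_v ord 0 1"
  by (auto simp: mem_U_0_iff mem_ball_v_iff ord_ge_def)

lemma measure_U_0: "measure M (U_n ord 0) = 1 - 1 / real q"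
proof -
  have "measure M (U_n ord 0) = measure M (ball_v ord 0 0) - measure M (ball_v ord 0 1)"
    unfolding U_0_eq_ball_v_diff by (rule measure_Diff) (auto simp: emeasure_ball_v ball_v_subset)
  then show ?thesis using q_ge_2 by (simp add: measure_ball_v powr_minus inverse_eq_divide)
qed

lemma integral_indicator_U_0:
  "integral\<^sup>L M (\<lambda>x. indicator (U_n ord 0) x *\<^sub>R (c::complex)) = (1 - 1 / real q) *\<^sub>R c"
proof -
  have "emeasure M (U_n ord 0) \<le> emeasure M (ball_v ord 0 0)"
    unfolding U_0_eq_ball_v_diff by (intro emeasure_mono) auto
  then have "emeasure M (U_n ord 0) < \<infinity>"
    using emeasure_ball_v_finite[of 0 0] by order
  then show ?thesis
    using measure_U_0 by (subst integral_scaleR_left) (auto simp: U_0_eq_ball_v_diff)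
qed

lemma unit_coset_eq_ball_v:
  assumes m: "m > 0" and u: "u \<in> U_n ord 0"
  shows "(\<lambda>y. u * y) ` U_n ord m = ball_v ord u (int m)"
proof (rule set_eqI)
  fix x
  have u0: "u \<noteq> 0" "ord u = 0" using u by (auto simp: mem_U_0_iff)
  show "x \<in> (\<lambda>y. u * y) ` U_n ord m \<longleftrightarrow> x \<in> ball_v ord u (int m)"
  proof
    assume "x \<in> (\<lambda>y. u * y) ` U_n ord m"
    then obtain y where y: "y \<in> U_n ord m" "x = u * y" by blast
    have "ord_ge ord (u * (y - 1)) m" using y(1) m ord_ge_unit_mult[OF u0] by (simp add: mem_U_n_iff)
    then show "x \<in> ball_v ord u (int m)" using y(2) by (simp add: mem_ball_v_iff algebra_simps)
  next
    assume "x \<in> ball_v ord u (int m)"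
    moreover have "x - u = u * (x / u - 1)"
      using u0 by (simp add: field_simps)
    ultimately have "x / u \<in> U_n ord m"
      using m ord_ge_unit_mult[OF u0] by (simp add: mem_ball_v_iff mem_U_n_iff)
    moreover have "x = u * (x / u)" using u0 by simp
    ultimately show "x \<in> (\<lambda>y. u * y) ` U_n ord m" by blast
  qed
qed

text \<open>The cosets of \<open>U\<^sup>(\<^sup>m\<^sup>)\<close> in \<open>U\<close> are disjoint balls of volume \<open>q\<^sup>-\<^sup>m\<close> filling out \<open>U\<close>.\<close>

lemma card_unit_cosets:
  assumes m: "m > 0"
  shows "real (card ((\<lambda>u. (\<lambda>y. u * y) ` U_n ord m) ` U_n ord 0)) = (1 - 1 / real q) * real q powr real m"
proof -
  let ?U = "U_n ord 0"
  define C where "C = (\<lambda>u. ball_v ord u (int m)) ` ?U"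
  have cosets: "(\<lambda>u. (\<lambda>y. u * y) ` U_n ord m) ` ?U = C"
    unfolding C_def using unit_coset_eq_ball_v[OF m] by (intro image_cong) auto
  obtain Cs where Cs: "finite Cs" "ball_v ord 0 0 \<subseteq> (\<Union>c\<in>Cs. ball_v ord c (int m))"
    using ball_v_finite_cover[of 0 "int m" 0] by auto
  have "C \<subseteq> (\<lambda>c. ball_v ord c (int m)) ` Cs"
  proof
    fix B assume "B \<in> C"
    then obtain u where u: "u \<in> ?U" "B = ball_v ord u (int m)" by (auto simp: C_def)
    then have "u \<in> ball_v ord 0 0" by (simp add: U_0_eq_ball_v_diff)
    then obtain c where c: "c \<in> Cs" "u \<in> ball_v ord c (int m)" using Cs(2) by blast
    then show "B \<in> (\<lambda>c. ball_v ord c (int m)) ` Cs" using ball_v_eq[OF c(2)] u(2) by blast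
  qed
  then have fin: "finite C" using Cs(1) finite_subset by blast
  have disj: "disjoint_family_on id C"
    unfolding disjoint_family_on_def C_def by (auto dest: ball_v_eq)
  have union: "(\<Union>B\<in>C. id B) = ?U"
  proof (rule set_eqI)
    fix x
    show "x \<in> (\<Union>B\<in>C. id B) \<longleftrightarrow> x \<in> ?U"
    proof
      assume "x \<in> (\<Union>B\<in>C. id B)"
      then obtain u where u: "u \<in> ?U" "x \<in> ball_v ord u (int m)" by (auto simp: C_def)
      then obtain y where "y \<in> U_n ord m" "x = u * y"
        using unit_coset_eq_ball_v[OF m u(1)] by blast
      then show "x \<in> ?U"
        using U_n_subset_U_0 u(1) by (auto simp: mem_U_0_iff ord_mult)
    next
      assume "x \<in> ?U"
      then show "x \<in> (\<Union>B\<in>C. id B)" unfolding C_def by fastforce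
    qed
  qed
  have "measure M (\<Union>B\<in>C. id B) = (\<Sum>B\<in>C. measure M (id B))"
    by (rule measure_finite_Union[OF fin _ disj]) (auto simp: C_def emeasure_ball_v)
  also have "\<dots> = (\<Sum>B\<in>C. real q powr (- real m))"
    by (intro sum.cong refl) (auto simp: C_def measure_ball_v)
  finally have "1 - 1 / real q = real (card C) * real q powr (- real m)"
    using union measure_U_0 by simp
  then show ?thesis
    using q_ge_2 cosets by (simp add: powr_minus field_simps)
qed

end

context shell_integrals
begin

lemma gauss_sum_unramified:
  assumes unram: "conductor_exp ord eta = 0" and triv: "\<And>x. x \<noteq> 0 \<Longrightarrow> ord x = 0 \<Longrightarrow> eta x = 1"
  shows "gauss_sum ord w q M psi eta = 1"
proof -
  let ?U = "U_n ord 0"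
  have "(\<lambda>y. u * y) ` ?U = ?U" if "u \<in> ?U" for u
  proof -
    have u0: "u \<noteq> 0" "ord u = 0" using that by (auto simp: mem_U_0_iff)
    show ?thesis
    proof (rule set_eqI)
      fix x
      show "x \<in> (\<lambda>y. u * y) ` ?U \<longleftrightarrow> x \<in> ?U"
      proof
        assume "x \<in> ?U"
        then have "x / u \<in> ?U" using u0 by (auto simp: mem_U_0_iff ord_divide)
        moreover have "x = u * (x / u)" using u0 by simp
        ultimately show "x \<in> (\<lambda>y. u * y) ` ?U" by blast
      qed (use u0 in \<open>auto simp: mem_U_0_iff ord_mult\<close>)
    qed
  qed
  moreover have "1 \<in> ?U" by (simp add: mem_U_0_iff)
  ultimately have cosets: "(\<lambda>u. (\<lambda>y. u * y) ` ?U) ` ?U = {?U}" by auto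
  have integrand_const: "(\<lambda>x. indicator ?U x *\<^sub>R (complex_of_real (real q / (real q - 1) / absv ord q x) * psi x * eta x))
      = (\<lambda>x. indicator ?U x *\<^sub>R complex_of_real (real q / (real q - 1)))"
    using triv psi_eq_1 by (auto simp: fun_eq_iff indicator_def mem_U_0_iff absv_def ord_ge_def)
  have "(1 - 1 / real q) * (real q / (real q - 1)) = 1"
    using q_ge_2 by (simp add: field_simps)
  then have "(1 - 1 / real q) *\<^sub>R complex_of_real (real q / (real q - 1)) = 1"
    by (metis of_real_1 of_real_mult scaleR_conv_of_real)
  moreover have shift_0: "(\<lambda>u. w powi (- int 0) * u) ` ?U = ?U" by simp
  ultimately show ?thesis
    unfolding gauss_sum_def Let_def unram cosets shift_0 set_lebesgue_integral_def integrand_const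
      integral_indicator_U_0
    by simp
qed

lemma integral_shell_integrand_conductor:
  "integral\<^sup>L M (shell_integrand (- int f)) =
     beta powi (- int f) * integral\<^sup>L M (\<lambda>x. indicator (shell (- int f)) x *\<^sub>R (chi x * psi x))"
proof -
  have "shell_integrand (- int f) =
      (\<lambda>x. beta powi (- int f) * (indicator (shell (- int f)) x *\<^sub>R (chi x * psi x)))"
    by (auto simp: fun_eq_iff shell_integrand_def integrand_def shell_def indicator_def)
  then show ?thesis by (simp only: integral_mult_right_zero)
qed

text \<open>On \<open>\<varpi>\<^sup>-\<^sup>f U\<close> the density \<open>q/(q-1) |x|\<^sup>-\<^sup>1\<close> of \<open>d\<^sup>\<times>x\<close> is the constant \<open>q\<^sup>1\<^sup>-\<^sup>f/(q-1)\<close>,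
  which is exactly cancelled by the index \<open>[U : U\<^sup>(\<^sup>f\<^sup>)] = (q - 1) q\<^sup>f\<^sup>-\<^sup>1\<close>.\<close>

lemma gauss_sum_eq_shell_integral:
  assumes "f > 0"
  shows "gauss_sum ord w q M psi chi =
     integral\<^sup>L M (\<lambda>x. indicator (shell (- int f)) x *\<^sub>R (chi x * psi x))"
proof -
  define J where "J = integral\<^sup>L M (\<lambda>x. indicator (shell (- int f)) x *\<^sub>R (chi x * psi x))"
  define K where "K = real q / (real q - 1) * real q powr (- real f)"
  define c where "c = card ((\<lambda>u. (\<lambda>y. u * y) ` U_n ord f) ` U_n ord 0)"
  have shifted_units: "(\<lambda>u. w powi (- int f) * u) ` U_n ord 0 = shell (- int f)"
  proof (rule set_eqI)
    fix x
    show "x \<in> (\<lambda>u. w powi (- int f) * u) ` U_n ord 0 \<longleftrightarrow> x \<in> shell (- int f)"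
    proof
      assume "x \<in> shell (- int f)"
      then have "x / w powi (- int f) \<in> U_n ord 0"
        using w_nonzero by (simp add: shell_def mem_U_0_iff ord_divide)
      moreover have "x = w powi (- int f) * (x / w powi (- int f))" using w_nonzero by simp
      ultimately show "x \<in> (\<lambda>u. w powi (- int f) * u) ` U_n ord 0" by blast
    qed (use w_nonzero in \<open>auto simp: mem_U_0_iff shell_def ord_mult\<close>)
  qed
  have density: "(\<lambda>x. indicator (shell (- int f)) x *\<^sub>R
        (complex_of_real (real q / (real q - 1) / absv ord q x) * psi x * chi x))
     = (\<lambda>x. of_real K * (indicator (shell (- int f)) x *\<^sub>R (chi x * psi x)))"
    by (auto simp: fun_eq_iff shell_def indicator_def absv_def K_def powr_minus divide_inverse)
  have "real c * K = 1"
    unfolding c_def card_unit_cosets[OF assms] K_def using q_ge_2 by (simp add: field_simps powr_minus)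
  then have "of_nat c * (of_real K * J) = J"
    by (metis mult.assoc mult_1 of_real_1 of_real_mult of_real_of_nat_eq)
  moreover have "integral\<^sup>L M (\<lambda>x. of_real K * (indicator (shell (- int f)) x *\<^sub>R (chi x * psi x))) =
      of_real K * J"
    unfolding J_def by (rule integral_mult_right_zero)
  ultimately show ?thesis
    unfolding gauss_sum_def Let_def shifted_units set_lebesgue_integral_def density
    by (simp add: J_def c_def)
qed

end

section \<open>The local factors\<close>

lemma L_GL1_unramified:
  "(\<forall>x\<in>U_n ord 0. eta x = 1) \<Longrightarrow>
   L_GL1 ord w q eta (1/2) = 1 / (1 - eta w * complex_of_real (real q powr (- (1/2))))"
  unfolding L_GL1_def conductor_exp_def by (subst Least_eq_0) auto

lemma L_GL1_ramified:
  assumes "\<exists>n. \<forall>x\<in>U_n ord n. eta x = 1" "\<not> (\<forall>x\<in>U_n ord 0. eta x = 1)"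
  shows "L_GL1 ord w q eta s = 1"
proof -
  have "\<forall>x\<in>U_n ord (conductor_exp ord eta). eta x = 1"
    unfolding conductor_exp_def by (rule LeastI_ex[OF assms(1)])
  then have "conductor_exp ord eta \<noteq> 0" using assms(2) by (intro notI) simp
  then show ?thesis by (simp add: L_GL1_def)
qed

lemma powr_minus_half_eq: "(x::real) > 0 \<Longrightarrow> x powr (- (1/2)) = sqrt x / x"
  by (simp add: powr_minus powr_half_sqrt field_simps real_sqrt_mult[symmetric])

locale tame_twist = shell_integrals +
  fixes chi1 chi2 :: "'a \<Rightarrow> complex" and special :: bool and alpha1 alpha2 :: complex
  assumes chi1: "quasi_char ord q chi1" "conductor_exp ord chi1 = 0"
    and chi2: "quasi_char ord q chi2" "conductor_exp ord chi2 = 0"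
    and alpha1: "alpha1 = chi1 w * complex_of_real (sqrt (real q))"
    and alpha2: "alpha2 = chi2 w * complex_of_real (sqrt (real q))"
    and beta: "beta = of_nat q / alpha2"
begin

definition e_tau_L :: "nat \<Rightarrow> complex \<Rightarrow> ('a \<Rightarrow> complex) \<Rightarrow> complex" where
  "e_tau_L n z eta = e_fac special q alpha1 alpha2 n z * gauss_sum ord w q M psi eta
     * L_pi ord w q special chi1 chi2 eta (1/2)"

definition unramified_value :: "complex \<Rightarrow> complex" where
  "unramified_value z = (1 - alpha2 / z / of_nat q) / (1 - z / alpha2)"

lemma q_nonzero: "(of_nat q :: complex) \<noteq> 0"
  using q_ge_2 by simp

lemma alpha1_nonzero: "alpha1 \<noteq> 0" and alpha2_nonzero: "alpha2 \<noteq> 0"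
  using alpha1 alpha2 quasi_char_nonzero[OF chi1(1) w_nonzero] quasi_char_nonzero[OF chi2(1) w_nonzero]
    q_ge_2 by auto

lemma L_pi_unramified:
  assumes "\<forall>x\<in>U_n ord 0. eta x = 1"
  shows "L_pi ord w q special chi1 chi2 eta (1/2) =
    (if special then 1 / (1 - alpha1 * eta w / of_nat q)
     else 1 / (1 - alpha1 * eta w / of_nat q) * (1 / (1 - alpha2 * eta w / of_nat q)))"
proof -
  have "chi_i w * eta w * complex_of_real (real q powr (- (1/2))) =
        chi_i w * complex_of_real (sqrt (real q)) * eta w / of_nat q" for chi_i
    using powr_minus_half_eq q_ge_2 by simp
  moreover have "\<forall>x\<in>U_n ord 0. chi1 x * eta x = 1" "\<forall>x\<in>U_n ord 0. chi2 x * eta x = 1"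
    using assms unramified_trivial_on_U_0[OF chi1] unramified_trivial_on_U_0[OF chi2] by auto
  ultimately show ?thesis
    unfolding L_pi_def using L_GL1_unramified[where eta = "\<lambda>x. chi1 x * eta x"]
      L_GL1_unramified[where eta = "\<lambda>x. chi2 x * eta x"]
      alpha1 alpha2 by simp
qed

text \<open>For unramified twists the Gauss sum is \<open>1\<close> and the Euler factors cancel against the
  numerator of \<open>e\<close>; this is the continuous extension across \<open>\<eta>(\<varpi>) = q/\<alpha>\<^sub>i\<close>.\<close>

lemma e_tau_L_unramified:
  assumes eta: "conductor_exp ord eta = 0" "\<forall>x\<in>U_n ord 0. eta x = 1"
    and guards: "eta w \<noteq> of_nat q / alpha1" "eta w \<noteq> of_nat q / alpha2"
  shows "e_tau_L 0 (eta w) eta = unramified_value (eta w)"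
proof -
  have "1 - a * eta w / of_nat q \<noteq> 0" if "eta w \<noteq> of_nat q / a" "a \<noteq> 0" for a
    using that q_nonzero by (auto simp: field_simps)
  then have A: "1 - alpha1 * eta w / of_nat q \<noteq> 0" and C: "1 - alpha2 * eta w / of_nat q \<noteq> 0"
    using guards alpha1_nonzero alpha2_nonzero by auto
  have cancel: "A * B / D * (1 / A) = B / D" "A * B * C / D * (1 / A * (1 / C)) = B / D"
    if "A \<noteq> 0" "C \<noteq> 0" for A B C D :: complex
    using that by (simp_all add: field_simps)
  have "gauss_sum ord w q M psi eta = 1"
    using gauss_sum_unramified eta by (simp add: mem_U_0_iff)
  then show ?thesis
    unfolding e_tau_L_def L_pi_unramified[OF eta(2)]
    using cancel[OF A C] by (simp add: e_fac_def unramified_value_def)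
qed

lemma ramified_limit:
  assumes "f > 0"
  shows "(\<lambda>n. set_lebesgue_integral M (annulus n) integrand) \<longlonglongrightarrow> e_tau_L f (chi w) chi"
proof (rule tendsto_eventually)
  have "L_GL1 ord w q (\<lambda>x. c x * chi x) (1/2) = 1" if c: "\<forall>x\<in>U_n ord 0. c x = 1" for c
  proof (rule L_GL1_ramified)
    show "\<exists>n. \<forall>x\<in>U_n ord n. c x * chi x = 1"
      using c quasi_char_trivial_on_U_conductor[OF quasi_char] U_n_antimono[of 0 f]
      by (intro exI[of _ f]) auto
    obtain u where "u \<in> U_n ord 0" "chi u \<noteq> 1"
      using nontrivial_on_U_n_below_conductor assms by blast
    then show "\<not> (\<forall>x\<in>U_n ord 0. c x * chi x = 1)" using c by auto
  qed
  then have "L_pi ord w q special chi1 chi2 chi (1/2) = 1"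
    unfolding L_pi_def using unramified_trivial_on_U_0[OF chi1] unramified_trivial_on_U_0[OF chi2]
    by simp
  moreover have "beta powi (- int f) = (alpha2 / of_nat q) ^ f"
    by (simp add: beta power_int_minus flip: power_inverse)
  ultimately have "beta powi (- int f) *
      integral\<^sup>L M (\<lambda>x. indicator (shell (- int f)) x *\<^sub>R (chi x * psi x)) = e_tau_L f (chi w) chi"
    using assms by (simp add: e_tau_L_def e_fac_def gauss_sum_eq_shell_integral)
  note limit_value = this
  show "\<forall>\<^sub>F n in sequentially. set_lebesgue_integral M (annulus n) integrand = e_tau_L f (chi w) chi"
    using eventually_ge_at_top[of f]
    by eventually_elim
      (simp add: set_integral_annulus_ramified[OF assms] integral_shell_integrand_conductor limit_value)
qed

lemma unramified_limit:
  assumes f0: "f = 0" and small: "cmod (chi w) < cmod alpha2"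
  shows "(\<lambda>n. set_lebesgue_integral M (annulus n) integrand) \<longlonglongrightarrow> unramified_value (chi w)"
proof -
  have "chi w * beta / of_nat q = chi w / alpha2"
    using q_nonzero by (simp add: beta)
  moreover have "chi w \<noteq> 0" "chi w \<noteq> alpha2"
    using quasi_char_nonzero[OF quasi_char w_nonzero] small by auto
  ultimately show ?thesis
    using unramified_annulus_limit[OF f0] small alpha2_nonzero q_nonzero
    by (simp add: norm_divide unramified_value_def beta field_simps)
qed

lemma e_tau_L_unramified_tendsto:
  assumes z: "z \<noteq> 0" "z \<noteq> alpha2"
  shows "((\<lambda>z. e_tau_L 0 z (\<lambda>x. z powi ord x)) \<longlongrightarrow> unramified_value z) (at z)"
proof -
  have "1 - z / alpha2 \<noteq> 0" using z alpha2_nonzero by (simp add: field_simps)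
  then have "(unramified_value \<longlongrightarrow> unramified_value z) (at z)"
    unfolding unramified_value_def using z alpha2_nonzero q_nonzero by (intro tendsto_intros) auto
  moreover have "\<forall>\<^sub>F z' in at z. unramified_value z' = e_tau_L 0 z' (\<lambda>x. z' powi ord x)"
    using eventually_neq_at_within[of "of_nat q / alpha1" z UNIV]
      eventually_neq_at_within[of "of_nat q / alpha2" z UNIV]
  proof eventually_elim
    case (elim z')
    have "\<forall>x\<in>U_n ord 0. z' powi ord x = 1" by (simp add: mem_U_0_iff)
    moreover from this have "conductor_exp ord (\<lambda>x. z' powi ord x) = 0"
      unfolding conductor_exp_def by (intro Least_eq_0) simp
    ultimately show ?case
      using e_tau_L_unramified[of "\<lambda>x. z' powi ord x"] elim by (simp add: ord_w)
  qed
  ultimately show ?thesis by (rule Lim_transform_eventually)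
qed

end

theorem proposition2p4:
  fixes ord :: "'a::field_char_0 \<Rightarrow> int" and w :: 'a and q :: nat and M :: "'a measure"
    and psi chi1 chi2 chi :: "'a \<Rightarrow> complex" and special :: bool
    and alpha1 alpha2 nu :: complex
  assumes F: "nonarch_local_field ord w q"
    and haar: "is_haar ord M"
    and hpsi: "add_char ord psi"
    and hchi1: "quasi_char ord q chi1" "conductor_exp ord chi1 = 0"
    and hchi2: "quasi_char ord q chi2" "conductor_exp ord chi2 = 0"
    and spec: "special \<longrightarrow> (\<forall>x. x \<noteq> 0 \<longrightarrow> chi1 x = complex_of_real (absv ord q x) * chi2 x)"
    and sph: "\<not> special \<longrightarrow>
       (\<exists>x. x \<noteq> 0 \<and> chi1 x \<noteq> complex_of_real (absv ord q x) * chi2 x) \<and>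
       (\<exists>x. x \<noteq> 0 \<and> chi2 x \<noteq> complex_of_real (absv ord q x) * chi1 x)"
    and a1: "alpha1 = chi1 w * complex_of_real (sqrt (real q))"
    and a2: "alpha2 = chi2 w * complex_of_real (sqrt (real q))"
    and nu: "nu = alpha1 * alpha2 / of_nat q"
    and hchi: "quasi_char ord q chi"
    and unr: "conductor_exp ord chi = 0 \<longrightarrow> cmod (chi w) < cmod alpha2"
  shows
    "(\<forall>n::nat. set_integrable M {x. x \<noteq> 0 \<and> - int n \<le> ord x \<and> ord x \<le> int n}
        (\<lambda>x. chi x * psi x * (alpha1 / nu) powi ord x)) \<and>
     (\<exists>I. (\<lambda>n::nat. LINT x : {x. x \<noteq> 0 \<and> - int n \<le> ord x \<and> ord x \<le> int n} | M.
             chi x * psi x * (alpha1 / nu) powi ord x) \<longlonglongrightarrow> I \<and>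
        (conductor_exp ord chi > 0 \<longrightarrow>
           I = e_fac special q alpha1 alpha2 (conductor_exp ord chi) (chi w) * gauss_sum ord w q M psi chi
               * L_pi ord w q special chi1 chi2 chi (1/2)) \<and>
        (conductor_exp ord chi = 0 \<longrightarrow>
           (chi w \<noteq> of_nat q / alpha1 \<and> chi w \<noteq> of_nat q / alpha2 \<longrightarrow>
              I = e_fac special q alpha1 alpha2 0 (chi w) * gauss_sum ord w q M psi chi
                  * L_pi ord w q special chi1 chi2 chi (1/2)) \<and>
           ((\<lambda>z. e_fac special q alpha1 alpha2 0 z * gauss_sum ord w q M psi (\<lambda>x. z powi ord x)
                  * L_pi ord w q special chi1 chi2 (\<lambda>x. z powi ord x) (1/2)) \<longlongrightarrow> I) (at (chi w))))"
proof -
  interpret local_field ord w q by unfold_locales (rule F)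
  have "alpha1 \<noteq> 0" "alpha2 \<noteq> 0"
    using a1 a2 q_ge_2 quasi_char_nonzero[OF hchi1(1) w_nonzero] quasi_char_nonzero[OF hchi2(1) w_nonzero]
    by auto
  then have "alpha1 / nu = of_nat q / alpha2"
    unfolding nu using q_ge_2 by (simp add: field_simps)
  then interpret tame_twist ord w q M psi chi "alpha1 / nu" chi1 chi2 special alpha1 alpha2
    by unfold_locales (use F haar hpsi hchi hchi1 hchi2 a1 a2 in auto)
  have annulus: "{x. x \<noteq> 0 \<and> - int n \<le> ord x \<and> ord x \<le> int n} = annulus n" for n
    by (simp add: annulus_def)
  have integrand: "(\<lambda>x. chi x * psi x * (alpha1 / nu) powi ord x) = integrand"
    by (simp add: fun_eq_iff integrand_def)
  have "(\<lambda>n. set_lebesgue_integral M (annulus n) integrand) \<longlonglongrightarrow> unramified_value (chi w)"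
    "chi w \<noteq> of_nat q / alpha1 \<and> chi w \<noteq> of_nat q / alpha2 \<longrightarrow> unramified_value (chi w) = e_tau_L 0 (chi w) chi"
    "((\<lambda>z. e_tau_L 0 z (\<lambda>x. z powi ord x)) \<longlongrightarrow> unramified_value (chi w)) (at (chi w))"
    if f0: "f = 0"
    using unramified_limit e_tau_L_unramified e_tau_L_unramified_tendsto unramified_trivial_on_U_0
      quasi_char_nonzero[OF hchi w_nonzero] unr f0 hchi by auto
  then show ?thesis
    using set_integrable_annulus ramified_limit unfolding annulus integrand e_tau_L_def
    by (cases "f = 0") auto
qed

end
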